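(* Let $H$ be a finite-dimensional real Hilbert space, $A\in B(H,H)$ symmetric with $\|A^{1/2}\mathbf{u}\|^2\ge\ell_0\|\mathbf{u}\|^2$ for all $\mathbf{u}$ ($\ell_0>0$), $\mathbf{N}:H\to H$ locally Lipschitz with $\mathbf{N}(\mathbf{u})\cdot\mathbf{u}=0$ for all $\mathbf{u}$, $\mathbf{F}\in H$ constant, and $\gamma>0$. For $k\in(0,1]$ let $\mathbb{S}_k$ be the map on $(H\times H)\times\mathbb{R}^2$ given by $\mathbb{S}_k((\mathbf{u}_0,\mathbf{u}_1),(q_0,q_1))=((\mathbf{u}_1,\mathbf{u}_2),(q_1,q_2))$, where $(\mathbf{u}_2,q_2)$ is the unique solution of $$\frac{3\mathbf{u}_2-4\mathbf{u}_1+\mathbf{u}_0}{2k}+A\mathbf{u}_2+q_2\mathbf{N}(2\mathbf{u}_1-\mathbf{u}_0)=\mathbf{F},\qquad \frac{3q_2-4q_1+q_0}{2k}+\gamma q_2-\mathbf{N}(2\mathbf{u}_1-\mathbf{u}_0)\cdot\mathbf{u}_2=\gamma,$$ and let $\mathscr{A}_k$ be the global attractor of the discrete dynamical system generated by $\mathbb{S}_k$. Then there exists a constant $C>0$ independent of $k$ such that $$\|\mathbf{u}_1-\mathbf{u}_2\|+|q_1-q_2|\le Ck\qquad\text{for all }((\mathbf{u}_1,\mathbf{u}_2),(q_1,q_2))\in\mathscr{A}_k\text{ and all }k.$$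
   Context: A global attractor of a discrete dynamical system is a compact invariant set attracting all bounded sets; $\mathbb{S}_k$ possesses one under the stated assumptions. *)

theory Defs
  imports "HOL-Analysis.Analysis"
begin

definition symmetric_op :: "('a::real_inner \<Rightarrow> 'a) \<Rightarrow> bool" where
  "symmetric_op A \<longleftrightarrow> (\<forall>u v. inner (A u) v = inner u (A v))"

definition is_pos_sqrt :: "('a::real_inner \<Rightarrow> 'a) \<Rightarrow> ('a \<Rightarrow> 'a) \<Rightarrow> bool" where
  "is_pos_sqrt B A \<longleftrightarrow> bounded_linear B \<and> symmetric_op B \<and> (\<forall>u. inner u (B u) \<ge> 0) \<and> B \<circ> B = A"

definition locally_lipschitz :: "('a::metric_space \<Rightarrow> 'b::metric_space) \<Rightarrow> bool" where
  "locally_lipschitz N \<longleftrightarrow>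
     (\<forall>x. \<exists>r>0. \<exists>L. \<forall>y\<in>ball x r. \<forall>z\<in>ball x r. dist (N y) (N z) \<le> L * dist y z)"

definition S_step ::
  "real \<Rightarrow> ('a::real_inner \<Rightarrow> 'a) \<Rightarrow> ('a \<Rightarrow> 'a) \<Rightarrow> 'a \<Rightarrow> real \<Rightarrow>
   ('a \<times> 'a) \<times> (real \<times> real) \<Rightarrow> ('a \<times> 'a) \<times> (real \<times> real)" where
  "S_step k A N F \<gamma> st =
    (case st of ((u0, u1), (q0, q1)) \<Rightarrow>
      (let (u2, q2) = (THE (u2, q2).
             (1 / (2 * k)) *\<^sub>R (3 *\<^sub>R u2 - 4 *\<^sub>R u1 + u0) + A u2
               + q2 *\<^sub>R N (2 *\<^sub>R u1 - u0) = F
           \<and> (3 * q2 - 4 * q1 + q0) / (2 * k) + \<gamma> * q2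
               - inner (N (2 *\<^sub>R u1 - u0)) u2 = \<gamma>)
       in ((u1, u2), (q1, q2))))"

definition global_attractor :: "('a::metric_space \<Rightarrow> 'a) \<Rightarrow> 'a set \<Rightarrow> bool" where
  "global_attractor S Att \<longleftrightarrow>
     Att \<noteq> {} \<and> compact Att \<and> S ` Att = Att \<and>
     (\<forall>B. bounded B \<longrightarrow>
        (\<forall>e>0. \<exists>n0. \<forall>n\<ge>n0. \<forall>x\<in>B. infdist ((S ^^ n) x) Att < e))"

end

theory Submission
  imports Defs
begin

(*
  Write z = (u, q) in H \<times> R. With w = N(2 u1 - u0) frozen, one step of the scheme is BDF2 for
  z' + L_w z = (F, \<gamma>), where L_w (u, q) = (A u + q w, \<gamma> q - w \<bullet> u). The two coupling terms
  cancel in z \<bullet> L_w z, so L_w is coercive with constant min l0 \<gamma> whatever w is. Coercivity makes the step uniquely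
  solvable and gives the BDF2 energy estimate for |z1|^2 + |2 z1 - z0|^2, uniformly in k.
  At a point of the compact invariant attractor where a Lyapunov functional built from this
  energy is maximal, the estimate bounds the functional by a constant independent of k, so the
  attractor lies in a fixed ball. There w is bounded, and the scheme gives
  3 |z2 - z1| \<le> |z1 - z0| + O(k); evaluated at a maximiser of |z1 - z0| this yields O(k).
*)

lemma inner_eq_norm_pos_sqrt:
  assumes "is_pos_sqrt B A"
  shows "inner u (A u) = (norm (B u))\<^sup>2"
proof -
  have "inner u (A u) = inner u (B (B u))"
    using assms unfolding is_pos_sqrt_def by (metis comp_apply)
  also have "\<dots> = inner (B u) (B u)"
    using assms by (simp add: is_pos_sqrt_def symmetric_op_def)
  finally show ?thesis
    by (simp add: power2_norm_eq_inner)
qed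

lemma locally_lipschitz_imp_continuous_on:
  assumes "locally_lipschitz N"
  shows "continuous_on UNIV N"
proof (rule continuous_at_imp_continuous_on, rule ballI)
  fix x
  obtain r L where "0 < r"
    and L: "\<forall>y\<in>ball x r. \<forall>z\<in>ball x r. dist (N y) (N z) \<le> L * dist y z"
    using assms unfolding locally_lipschitz_def by blast
  have "(max L 0)-lipschitz_on (ball x r) N"
  proof (rule lipschitz_onI)
    fix y z
    assume "y \<in> ball x r" "z \<in> ball x r"
    then have "dist (N y) (N z) \<le> L * dist y z"
      using L by blast
    also have "\<dots> \<le> max L 0 * dist y z"
      by (simp add: mult_right_mono)
    finally show "dist (N y) (N z) \<le> max L 0 * dist y z" .
  qed simp
  then have "continuous_on (ball x r) N"
    by (rule lipschitz_on_continuous_on)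
  then show "isCont N x"
    using \<open>0 < r\<close> by (simp add: continuous_on_interior)
qed

lemma global_attractor_invariant: "global_attractor S Att \<Longrightarrow> S ` Att = Att"
  by (simp add: global_attractor_def)

lemma global_attractor_bound:
  fixes f :: "'s::metric_space \<Rightarrow> real"
  assumes attractor: "global_attractor S Att" and "continuous_on Att f"
    and step: "\<And>y. y \<in> Att \<Longrightarrow> \<alpha> * f (S y) \<le> f y + \<beta>" and "1 < \<alpha>"
    and "x \<in> Att"
  shows "f x \<le> \<beta> / (\<alpha> - 1)"
proof -
  obtain m where "m \<in> Att" and max: "\<forall>y\<in>Att. f y \<le> f m"
    using continuous_attains_sup[of Att f] attractor \<open>continuous_on Att f\<close>
    unfolding global_attractor_def by auto
  moreover obtain y where "y \<in> Att" "m = S y"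
    using \<open>m \<in> Att\<close> global_attractor_invariant[OF attractor] by blast
  ultimately have "\<alpha> * f m \<le> f m + \<beta>"
    using step by fastforce
  then have "f m \<le> \<beta> / (\<alpha> - 1)"
    using \<open>1 < \<alpha>\<close> by (simp add: field_simps)
  then show ?thesis
    using max \<open>x \<in> Att\<close> by fastforce
qed

lemma bij_scaleR_plus_monotone_linear:
  fixes L :: "'a::euclidean_space \<Rightarrow> 'a"
  assumes "linear L" and monotone: "\<And>z. 0 \<le> inner z (L z)" and "0 < a"
  shows "bij (\<lambda>z. a *\<^sub>R z + L z)"
proof -
  have lin: "linear (\<lambda>z. a *\<^sub>R z + L z)"
    using \<open>linear L\<close> by (intro linearI) (auto simp: linear_add linear_scale algebra_simps)
  have "z = 0" if "a *\<^sub>R z + L z = 0" for z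
  proof -
    have "a * (norm z)\<^sup>2 + inner z (L z) = 0"
      using arg_cong[OF that, of "inner z"] by (simp add: inner_add_right power2_norm_eq_inner)
    then have "a * (norm z)\<^sup>2 = 0"
      using monotone[of z] \<open>0 < a\<close> by (smt (verit) mult_nonneg_nonneg zero_le_power2)
    then show "z = 0"
      using \<open>0 < a\<close> by simp
  qed
  then have "inj (\<lambda>z. a *\<^sub>R z + L z)"
    using linear_injective_0[OF lin] by blast
  then show ?thesis
    using lin linear_inj_imp_surj by (blast intro: bijI)
qed

definition bdf2_energy :: "'a::real_normed_vector \<Rightarrow> 'a \<Rightarrow> real" where
  "bdf2_energy z0 z1 = (norm z1)\<^sup>2 + (norm (2 *\<^sub>R z1 - z0))\<^sup>2"

lemma bdf2_inner_identity:
  fixes z0 z1 z2 :: "'a::real_inner"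
  shows "2 * inner (3 *\<^sub>R z2 - 4 *\<^sub>R z1 + z0) z2
    = bdf2_energy z1 z2 - bdf2_energy z0 z1 + (norm (z2 - 2 *\<^sub>R z1 + z0))\<^sup>2"
  by (simp add: bdf2_energy_def power2_norm_eq_inner inner_diff_left inner_diff_right
      inner_add_left inner_add_right inner_commute algebra_simps)

lemma norm_le_bdf2_energy: "(norm z1)\<^sup>2 \<le> bdf2_energy z0 z1"
  by (simp add: bdf2_energy_def)

lemma bdf2_energy_le: "bdf2_energy z0 z1 \<le> 9 * (norm z1)\<^sup>2 + 2 * (norm z0)\<^sup>2"
proof -
  have "norm (2 *\<^sub>R z1 - z0) \<le> 2 * norm z1 + norm z0"
    using norm_triangle_ineq4[of "2 *\<^sub>R z1" z0] by simp
  then have "(norm (2 *\<^sub>R z1 - z0))\<^sup>2 \<le> (2 * norm z1 + norm z0)\<^sup>2"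
    by (simp add: power_mono)
  also have "\<dots> \<le> 8 * (norm z1)\<^sup>2 + 2 * (norm z0)\<^sup>2"
    using zero_le_power2[of "2 * norm z1 - norm z0"] by (simp add: power2_eq_square algebra_simps)
  finally show ?thesis
    by (simp add: bdf2_energy_def)
qed

lemma lyapunov_contraction:
  fixes k \<mu> a a' E E' K :: real
  assumes "0 < k" "k \<le> 1" "0 < \<mu>" "0 \<le> a" "0 \<le> a'"
    and dissipation: "E' + 2 * k * \<mu> * a' \<le> E + 2 * k * K"
    and "E' \<le> 9 * a' + 2 * a"
  shows "(1 + \<mu> / (9 + \<mu>) * k) * (E' + k * \<mu> * a') \<le> E + k * \<mu> * a + 2 * k * K"
proof -
  define \<epsilon> where "\<epsilon> = \<mu> / (9 + \<mu>)"
  have \<epsilon>: "0 < \<epsilon>" "\<epsilon> * (9 + \<mu>) = \<mu>" "2 * \<epsilon> \<le> \<mu>"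
    using \<open>0 < \<mu>\<close> by (auto simp: \<epsilon>_def field_simps)
  have "\<epsilon> * k * E' \<le> \<epsilon> * k * (9 * a' + 2 * a)"
    using assms \<epsilon> by (intro mult_left_mono) auto
  moreover have "\<epsilon> * k * (k * \<mu> * a') \<le> \<epsilon> * k * (\<mu> * a')"
    using assms \<epsilon> by (intro mult_left_mono) (auto simp: mult_left_le_one_le)
  moreover have "2 * \<epsilon> * k * a \<le> \<mu> * k * a"
    using assms \<epsilon> by (intro mult_right_mono) auto
  moreover have "\<epsilon> * k * (9 * a' + 2 * a) + \<epsilon> * k * (\<mu> * a') = k * a' * (\<epsilon> * (9 + \<mu>)) + 2 * \<epsilon> * k * a"
    by (simp add: algebra_simps)
  ultimately have "(1 + \<epsilon> * k) * (E' + k * \<mu> * a') \<le> E' + 2 * k * \<mu> * a' + k * \<mu> * a"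
    unfolding \<epsilon>(2) by (simp add: algebra_simps)
  then show ?thesis
    using dissipation by (simp add: \<epsilon>_def)
qed

definition prev_uq :: "('a \<times> 'a) \<times> (real \<times> real) \<Rightarrow> 'a \<times> real" where
  "prev_uq x = (fst (fst x), fst (snd x))"

definition cur_uq :: "('a \<times> 'a) \<times> (real \<times> real) \<Rightarrow> 'a \<times> real" where
  "cur_uq x = (snd (fst x), snd (snd x))"

locale bdf2_scheme =
  fixes A N :: "'a::euclidean_space \<Rightarrow> 'a" and F :: 'a and l0 \<gamma> :: real
  assumes bounded_linear_A: "bounded_linear A"
    and coercive_A: "\<And>u. l0 * (norm u)\<^sup>2 \<le> inner u (A u)"
    and l0_pos: "0 < l0" and \<gamma>_pos: "0 < \<gamma>"
    and continuous_N: "continuous_on UNIV N"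
begin

abbreviation S :: "real \<Rightarrow> ('a \<times> 'a) \<times> (real \<times> real) \<Rightarrow> ('a \<times> 'a) \<times> (real \<times> real)" where
  "S k \<equiv> S_step k A N F \<gamma>"

definition coupled_op :: "'a \<Rightarrow> 'a \<times> real \<Rightarrow> 'a \<times> real" where
  "coupled_op w z = (A (fst z) + snd z *\<^sub>R w, \<gamma> * snd z - inner w (fst z))"

definition scheme_eq :: "real \<Rightarrow> 'a \<times> real \<Rightarrow> 'a \<times> real \<Rightarrow> 'a \<times> real \<Rightarrow> bool" where
  "scheme_eq k z0 z1 z2 \<longleftrightarrow>
     (1 / (2 * k)) *\<^sub>R (3 *\<^sub>R z2 - 4 *\<^sub>R z1 + z0) + coupled_op (N (2 *\<^sub>R fst z1 - fst z0)) z2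
       = (F, \<gamma>)"

definition \<mu> :: real where
  "\<mu> = min l0 \<gamma>"

lemma \<mu>_pos: "0 < \<mu>"
  using l0_pos \<gamma>_pos by (simp add: \<mu>_def)

lemma linear_coupled_op: "linear (coupled_op w)"
  using bounded_linear.linear[OF bounded_linear_A]
  by (intro linearI) (auto simp: coupled_op_def linear_add linear_scale algebra_simps)

lemma coercive_coupled_op: "\<mu> * (norm z)\<^sup>2 \<le> inner z (coupled_op w z)"
proof -
  have "inner z (coupled_op w z) = inner (fst z) (A (fst z)) + \<gamma> * (snd z)\<^sup>2"
    by (simp add: coupled_op_def inner_prod_def inner_add_right inner_commute power2_eq_square
        algebra_simps)
  moreover have "\<mu> * (norm (fst z))\<^sup>2 \<le> inner (fst z) (A (fst z))"
    using coercive_A[of "fst z"] by (smt (verit) \<mu>_def min.cobounded1 mult_right_mono zero_le_power2)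
  moreover have "\<mu> * (snd z)\<^sup>2 \<le> \<gamma> * (snd z)\<^sup>2"
    by (simp add: \<mu>_def mult_right_mono)
  ultimately show ?thesis
    by (simp add: norm_prod_def distrib_left)
qed

lemma norm_coupled_op_le:
  "norm (coupled_op w z) \<le> (onorm A + \<gamma> + 2 * norm w) * norm z"
proof -
  have u: "norm (fst z) \<le> norm z" and q: "\<bar>snd z\<bar> \<le> norm z"
    using norm_fst_le[of "fst z" "snd z"] norm_snd_le[of "snd z" "fst z"] by simp_all
  have "norm (A (fst z) + snd z *\<^sub>R w) \<le> onorm A * norm z + norm w * norm z"
    using norm_triangle_ineq[of "A (fst z)" "snd z *\<^sub>R w"] onorm[OF bounded_linear_A, of "fst z"]
      mult_left_mono[OF u onorm_pos_le[OF bounded_linear_A]] mult_left_mono[OF q norm_ge_zero[of w]]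
    by (simp add: mult.commute)
  moreover have "\<bar>\<gamma> * snd z\<bar> \<le> \<gamma> * norm z"
    using mult_left_mono[OF q less_imp_le[OF \<gamma>_pos]] \<gamma>_pos by (simp add: abs_mult)
  then have "\<bar>\<gamma> * snd z - inner w (fst z)\<bar> \<le> \<gamma> * norm z + norm w * norm z"
    using Cauchy_Schwarz_ineq2[of w "fst z"] mult_left_mono[OF u norm_ge_zero[of w]] by linarith
  ultimately show ?thesis
    using norm_Pair_le[of "A (fst z) + snd z *\<^sub>R w" "\<gamma> * snd z - inner w (fst z)"]
    by (simp add: coupled_op_def algebra_simps)
qed

lemma scheme_eq_unique_solution:
  assumes "0 < k"
  shows "\<exists>!z2. scheme_eq k z0 z1 z2"
proof -
  define w where "w = N (2 *\<^sub>R fst z1 - fst z0)"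
  have "scheme_eq k z0 z1 z \<longleftrightarrow>
      (3 / (2 * k)) *\<^sub>R z + coupled_op w z = (F, \<gamma>) + (1 / (2 * k)) *\<^sub>R (4 *\<^sub>R z1 - z0)" for z
  proof -
    have "(1 / (2 * k)) *\<^sub>R (3 *\<^sub>R z - 4 *\<^sub>R z1 + z0)
        = (3 / (2 * k)) *\<^sub>R z - (1 / (2 * k)) *\<^sub>R (4 *\<^sub>R z1 - z0)"
      by (simp add: algebra_simps)
    then show ?thesis
      unfolding scheme_eq_def w_def by (auto simp: diff_add_eq diff_eq_eq)
  qed
  moreover have "0 \<le> inner z (coupled_op w z)" for z
    using coercive_coupled_op[of z w] \<mu>_pos by (smt (verit) mult_nonneg_nonneg zero_le_power2)
  then have "bij (\<lambda>z. (3 / (2 * k)) *\<^sub>R z + coupled_op w z)"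
    using linear_coupled_op \<open>0 < k\<close> by (intro bij_scaleR_plus_monotone_linear) auto
  ultimately show ?thesis
    unfolding bij_iff by presburger
qed

lemma S_step_scheme:
  assumes "0 < k"
  shows "prev_uq (S k x) = cur_uq x" and "scheme_eq k (prev_uq x) (cur_uq x) (cur_uq (S k x))"
proof -
  obtain u0 u1 q0 q1 where x: "x = ((u0, u1), (q0, q1))"
    by (metis prod.collapse)
  define z0 z1 where "z0 = (u0, q0)" and "z1 = (u1, q1)"
  define z2 where "z2 = (THE z. scheme_eq k z0 z1 z)"
  have "scheme_eq k z0 z1 z2"
    unfolding z2_def using scheme_eq_unique_solution[OF \<open>0 < k\<close>] by (rule theI')
  moreover have "S k x = ((u1, fst z2), (q1, snd z2))"
  proof -
    have "(\<lambda>(u2, q2). (1 / (2 * k)) *\<^sub>R (3 *\<^sub>R u2 - 4 *\<^sub>R u1 + u0) + A u2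
          + q2 *\<^sub>R N (2 *\<^sub>R u1 - u0) = F
        \<and> (3 * q2 - 4 * q1 + q0) / (2 * k) + \<gamma> * q2 - inner (N (2 *\<^sub>R u1 - u0)) u2 = \<gamma>)
      = scheme_eq k z0 z1"
      by (auto simp: fun_eq_iff scheme_eq_def coupled_op_def z0_def z1_def diff_divide_distrib
          add_divide_distrib algebra_simps)
    then show ?thesis
      by (simp add: S_step_def x z2_def split_beta)
  qed
  ultimately show "prev_uq (S k x) = cur_uq x"
    and "scheme_eq k (prev_uq x) (cur_uq x) (cur_uq (S k x))"
    by (simp_all add: prev_uq_def cur_uq_def x z0_def z1_def)
qed

lemma scheme_eq_residual:
  assumes "0 < k" and "scheme_eq k z0 z1 z2"
  shows "3 *\<^sub>R z2 - 4 *\<^sub>R z1 + z0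
    = (2 * k) *\<^sub>R ((F, \<gamma>) - coupled_op (N (2 *\<^sub>R fst z1 - fst z0)) z2)"
proof -
  have "3 *\<^sub>R z2 - 4 *\<^sub>R z1 + z0 = (2 * k) *\<^sub>R ((1 / (2 * k)) *\<^sub>R (3 *\<^sub>R z2 - 4 *\<^sub>R z1 + z0))"
    using \<open>0 < k\<close> by simp
  also have "(1 / (2 * k)) *\<^sub>R (3 *\<^sub>R z2 - 4 *\<^sub>R z1 + z0)
      = (F, \<gamma>) - coupled_op (N (2 *\<^sub>R fst z1 - fst z0)) z2"
    using assms(2) unfolding scheme_eq_def by (simp add: eq_diff_eq)
  finally show ?thesis .
qed

lemma energy_estimate:
  assumes "0 < k" and "scheme_eq k z0 z1 z2"
  shows "bdf2_energy z1 z2 + 2 * k * \<mu> * (norm z2)\<^sup>2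
    \<le> bdf2_energy z0 z1 + 2 * k * ((norm (F, \<gamma>))\<^sup>2 / \<mu>)"
proof -
  define Lz where "Lz = coupled_op (N (2 *\<^sub>R fst z1 - fst z0)) z2"
  define g where "g = norm (F, \<gamma>)"
  have "bdf2_energy z1 z2 - bdf2_energy z0 z1 \<le> 2 * inner (3 *\<^sub>R z2 - 4 *\<^sub>R z1 + z0) z2"
    using bdf2_inner_identity[of z2 z1 z0] by simp
  also have "\<dots> = 4 * k * (inner (F, \<gamma>) z2 - inner z2 Lz)"
    using scheme_eq_residual[OF assms] by (simp add: Lz_def inner_diff_right inner_commute)
  also have "\<dots> \<le> 4 * k * ((\<mu> / 2 * (norm z2)\<^sup>2 + g\<^sup>2 / (2 * \<mu>)) - \<mu> * (norm z2)\<^sup>2)"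
  proof -
    have "g * norm z2 \<le> \<mu> / 2 * (norm z2)\<^sup>2 + g\<^sup>2 / (2 * \<mu>)"
      using zero_le_power2[of "\<mu> * norm z2 - g"] \<mu>_pos
      by (simp add: field_simps power2_eq_square)
    then have "inner (F, \<gamma>) z2 \<le> \<mu> / 2 * (norm z2)\<^sup>2 + g\<^sup>2 / (2 * \<mu>)"
      using norm_cauchy_schwarz[of "(F, \<gamma>)" z2] by (simp add: g_def)
    then have "inner (F, \<gamma>) z2 - inner z2 Lz
        \<le> (\<mu> / 2 * (norm z2)\<^sup>2 + g\<^sup>2 / (2 * \<mu>)) - \<mu> * (norm z2)\<^sup>2"
      using coercive_coupled_op[of z2 "N (2 *\<^sub>R fst z1 - fst z0)"] unfolding Lz_def by linarith
    then show ?thesis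
      using \<open>0 < k\<close> by (intro mult_left_mono) auto
  qed
  also have "\<dots> = 2 * k * (g\<^sup>2 / \<mu>) - 2 * k * \<mu> * (norm z2)\<^sup>2"
    using \<mu>_pos by (simp add: field_simps power2_eq_square)
  finally show ?thesis
    by (simp add: g_def)
qed

definition lyapunov :: "real \<Rightarrow> ('a \<times> 'a) \<times> (real \<times> real) \<Rightarrow> real" where
  "lyapunov k x = bdf2_energy (prev_uq x) (cur_uq x) + k * \<mu> * (norm (cur_uq x))\<^sup>2"

lemma lyapunov_step:
  assumes "0 < k" "k \<le> 1"
  shows "(1 + \<mu> / (9 + \<mu>) * k) * lyapunov k (S k x)
    \<le> lyapunov k x + 2 * k * ((norm (F, \<gamma>))\<^sup>2 / \<mu>)"
  using lyapunov_contraction[OF assms \<mu>_pos zero_le_power2 zero_le_power2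
      energy_estimate[OF \<open>0 < k\<close> S_step_scheme(2)[OF \<open>0 < k\<close>]]
      bdf2_energy_le]
  by (simp add: lyapunov_def S_step_scheme(1)[OF \<open>0 < k\<close>])

definition radius :: real where
  "radius = sqrt (2 * (9 + \<mu>) * (norm (F, \<gamma>))\<^sup>2 / \<mu>\<^sup>2)"

lemma radius_nonneg: "0 \<le> radius"
  using \<mu>_pos by (simp add: radius_def)

lemma norm_cur_uq_le_radius:
  assumes "global_attractor (S k) Att" "0 < k" "k \<le> 1" "x \<in> Att"
  shows "norm (cur_uq x) \<le> radius"
proof -
  have cont: "continuous_on Att (lyapunov k)"
    unfolding lyapunov_def bdf2_energy_def prev_uq_def cur_uq_def by (intro continuous_intros)
  have "1 < 1 + \<mu> / (9 + \<mu>) * k"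
    using \<mu>_pos \<open>0 < k\<close> by simp
  then have "lyapunov k x \<le> 2 * k * ((norm (F, \<gamma>))\<^sup>2 / \<mu>) / (1 + \<mu> / (9 + \<mu>) * k - 1)"
    using lyapunov_step[OF assms(2,3)] by (intro global_attractor_bound[OF assms(1) cont _ _ assms(4)])
  also have "\<dots> = 2 * (9 + \<mu>) * (norm (F, \<gamma>))\<^sup>2 / \<mu>\<^sup>2"
    using \<mu>_pos \<open>0 < k\<close> by (simp add: field_simps power2_eq_square)
  also have "\<dots> = radius\<^sup>2"
    using \<mu>_pos by (simp add: radius_def)
  finally have "(norm (cur_uq x))\<^sup>2 \<le> radius\<^sup>2"
    using norm_le_bdf2_energy[of "cur_uq x" "prev_uq x"] \<mu>_pos \<open>0 < k\<close>
    unfolding lyapunov_def by (smt (verit) mult_nonneg_nonneg zero_le_power2)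
  then show ?thesis
    using power2_le_imp_le radius_nonneg by blast
qed

lemma norm_prev_uq_le_radius:
  assumes "global_attractor (S k) Att" "0 < k" "k \<le> 1" "x \<in> Att"
  shows "norm (prev_uq x) \<le> radius"
proof -
  obtain y where "y \<in> Att" "x = S k y"
    using global_attractor_invariant[OF assms(1)] assms(4) by blast
  then show ?thesis
    using norm_cur_uq_le_radius[OF assms(1-3)] S_step_scheme(1)[OF \<open>0 < k\<close>] by simp
qed

lemma increment_step:
  assumes "0 < k" and "scheme_eq k z0 z1 z2"
  shows "3 * norm (z2 - z1)
    \<le> norm (z1 - z0) + 2 * k * norm ((F, \<gamma>) - coupled_op (N (2 *\<^sub>R fst z1 - fst z0)) z2)"
proof -
  have "(4::real) *\<^sub>R z1 = z1 + 3 *\<^sub>R z1"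
    by (simp add: scaleR_add_left[of 1 3, simplified, symmetric])
  then have "3 *\<^sub>R (z2 - z1) = (z1 - z0) + (3 *\<^sub>R z2 - 4 *\<^sub>R z1 + z0)"
    by (simp add: algebra_simps)
  then have "3 * norm (z2 - z1) = norm ((z1 - z0) + (3 *\<^sub>R z2 - 4 *\<^sub>R z1 + z0))"
    by (metis norm_scaleR abs_numeral)
  also have "\<dots> \<le> norm (z1 - z0) + norm (3 *\<^sub>R z2 - 4 *\<^sub>R z1 + z0)"
    by (rule norm_triangle_ineq)
  finally show ?thesis
    using scheme_eq_residual[OF assms] \<open>0 < k\<close> by simp
qed

lemma attractor_increment_step:
  assumes "global_attractor (S k) Att" "0 < k" "k \<le> 1" "y \<in> Att"
    and N_bound: "\<And>v. norm v \<le> 3 * radius \<Longrightarrow> norm (N v) \<le> NB"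
  shows "3 * norm (cur_uq (S k y) - prev_uq (S k y))
    \<le> norm (cur_uq y - prev_uq y) + 2 * k * (norm (F, \<gamma>) + (onorm A + \<gamma> + 2 * NB) * radius)"
proof -
  define w where "w = N (2 *\<^sub>R fst (cur_uq y) - fst (prev_uq y))"
  have "norm (2 *\<^sub>R fst (cur_uq y) - fst (prev_uq y)) \<le> 2 * norm (cur_uq y) + norm (prev_uq y)"
    using norm_triangle_ineq4[of "2 *\<^sub>R fst (cur_uq y)" "fst (prev_uq y)"]
      norm_fst_le[of "fst (cur_uq y)" "snd (cur_uq y)"] norm_fst_le[of "fst (prev_uq y)" "snd (prev_uq y)"]
    by simp
  then have "norm w \<le> NB"
    using norm_cur_uq_le_radius[OF assms(1-4)] norm_prev_uq_le_radius[OF assms(1-4)]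
    unfolding w_def by (intro N_bound) linarith
  moreover have "S k y \<in> Att"
    using global_attractor_invariant[OF assms(1)] assms(4) by blast
  then have "norm (cur_uq (S k y)) \<le> radius"
    by (rule norm_cur_uq_le_radius[OF assms(1-3)])
  ultimately have "(onorm A + \<gamma> + 2 * norm w) * norm (cur_uq (S k y))
      \<le> (onorm A + \<gamma> + 2 * NB) * radius"
    using onorm_pos_le[OF bounded_linear_A] \<gamma>_pos
    by (intro mult_mono) (simp_all add: add_nonneg_nonneg order_trans[OF norm_ge_zero])
  then have "norm ((F, \<gamma>) - coupled_op w (cur_uq (S k y)))
      \<le> norm (F, \<gamma>) + (onorm A + \<gamma> + 2 * NB) * radius"
    using norm_triangle_ineq4[of "(F, \<gamma>)" "coupled_op w (cur_uq (S k y))"]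
      norm_coupled_op_le[of w "cur_uq (S k y)"] by linarith
  then have "2 * k * norm ((F, \<gamma>) - coupled_op w (cur_uq (S k y)))
      \<le> 2 * k * (norm (F, \<gamma>) + (onorm A + \<gamma> + 2 * NB) * radius)"
    using \<open>0 < k\<close> by (intro mult_left_mono) auto
  moreover have "3 * norm (cur_uq (S k y) - cur_uq y)
      \<le> norm (cur_uq y - prev_uq y) + 2 * k * norm ((F, \<gamma>) - coupled_op w (cur_uq (S k y)))"
    unfolding w_def by (rule increment_step[OF \<open>0 < k\<close> S_step_scheme(2)[OF \<open>0 < k\<close>]])
  ultimately show ?thesis
    using S_step_scheme(1)[OF \<open>0 < k\<close>, of y] by simp
qed

lemma increment_bound_on_attractors:
  "\<exists>C>0. \<forall>k\<in>{0<..1}. \<forall>Att. global_attractor (S k) Att \<longrightarrow>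
     (\<forall>u1 u2 q1 q2. ((u1, u2), (q1, q2)) \<in> Att \<longrightarrow> norm (u1 - u2) + \<bar>q1 - q2\<bar> \<le> C * k)"
proof -
  have "bounded (N ` cball 0 (3 * radius))"
    by (intro compact_imp_bounded compact_continuous_image continuous_on_subset[OF continuous_N])
      auto
  then obtain NB where "\<forall>v\<in>cball 0 (3 * radius). norm (N v) \<le> NB"
    unfolding bounded_iff by blast
  then have N_bound: "norm (N v) \<le> NB" if "norm v \<le> 3 * radius" for v
    using that by simp
  define M where "M = norm (F, \<gamma>) + (onorm A + \<gamma> + 2 * NB) * radius"
  have "0 \<le> NB"
    using N_bound[of 0] radius_nonneg by (simp add: order_trans[OF norm_ge_zero])
  moreover have "0 < norm (F, \<gamma>)"
    using \<gamma>_pos by (simp add: zero_prod_def)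
  ultimately have "0 < M"
    using onorm_pos_le[OF bounded_linear_A] \<gamma>_pos radius_nonneg
    by (simp add: M_def add_pos_nonneg)
  have "norm (u1 - u2) + \<bar>q1 - q2\<bar> \<le> 2 * M * k"
    if "0 < k" "k \<le> 1" "global_attractor (S k) Att" "((u1, u2), (q1, q2)) \<in> Att"
    for k Att u1 u2 q1 q2
  proof -
    have "continuous_on Att (\<lambda>x. norm (cur_uq x - prev_uq x))"
      unfolding prev_uq_def cur_uq_def by (intro continuous_intros)
    then have "norm (cur_uq ((u1, u2), (q1, q2)) - prev_uq ((u1, u2), (q1, q2))) \<le> 2 * k * M / (3 - 1)"
      using attractor_increment_step[OF that(3,1,2) _ N_bound] unfolding M_def
      by (intro global_attractor_bound[OF that(3) _ _ _ that(4)]) auto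
    then have "norm (u2 - u1, q2 - q1) \<le> k * M"
      by (simp add: prev_uq_def cur_uq_def)
    then have "norm (u1 - u2) + \<bar>q1 - q2\<bar> \<le> 2 * (k * M)"
      using norm_fst_le[of "u2 - u1" "q2 - q1"] norm_snd_le[of "q2 - q1" "u2 - u1"]
      by (simp add: norm_minus_commute abs_minus_commute)
    then show ?thesis
      by (simp add: algebra_simps)
  qed
  then show ?thesis
    using \<open>0 < M\<close> by (intro exI[of _ "2 * M"]) auto
qed

end

theorem proposition4:
  fixes A B N :: "'a::euclidean_space \<Rightarrow> 'a" and F :: 'a and l0 \<gamma> :: real
  assumes "bounded_linear A" and "symmetric_op A"
    and "is_pos_sqrt B A"
    and "l0 > 0" and "\<forall>u. (norm (B u))\<^sup>2 \<ge> l0 * (norm u)\<^sup>2"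
    and "locally_lipschitz N" and "\<forall>u. inner (N u) u = 0"
    and "\<gamma> > 0"
  shows "\<exists>C>0. \<forall>k\<in>{0<..1}. \<forall>Att. global_attractor (S_step k A N F \<gamma>) Att \<longrightarrow>
           (\<forall>u1 u2 q1 q2. ((u1, u2), (q1, q2)) \<in> Att \<longrightarrow>
              norm (u1 - u2) + \<bar>q1 - q2\<bar> \<le> C * k)"
proof -
  have "l0 * (norm u)\<^sup>2 \<le> inner u (A u)" for u
    using assms(3,5) by (simp add: inner_eq_norm_pos_sqrt)
  then interpret bdf2_scheme A N F l0 \<gamma>
    using assms(1,4,8) locally_lipschitz_imp_continuous_on[OF assms(6)]
    by (simp add: bdf2_scheme_def)
  show ?thesis
    by (rule increment_bound_on_attractors)
qed

end
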